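(* Fix $\epsilon_0>0$, $c>0$, $h\in[k]$, and suppose $n\alpha\ge c\log n$. Then there is an event $\mathcal{E}^{\mathrm{con}}_{\epsilon_0}$ with $\mathbb{P}[\mathcal{E}^{\mathrm{con}}_{\epsilon_0}]\ge 1-kn^{-c/4}$ on which, for every $g\in[k]$ with $g\neq h$, $$\sum_{i\in T_g^*}\mathbf{1}\Big\{\epsilon_0^2\|\theta_g-\theta_h\|^2\le\langle w_i,\theta_h-\theta_g\rangle\Big\}\ \le\ \frac{5n_g^*}{2\epsilon_0^4(\Delta/\sigma)^2}.$$
   Context: Model: $Y_i=\theta_{z_i}+w_i$, $i=1,\dots,n$, with $z\in[k]^n$, centroids $\theta_1,\dots,\theta_k\in\mathbb{R}^d$, and $w_1,\dots,w_n$ independent zero-mean sub-Gaussian vectors with parameter $\sigma>0$, i.e. $\mathbb{E}[e^{\langle a,w_i\rangle}]\le e^{\sigma^2\|a\|^2/2}$ for all $a\in\mathbb{R}^d$. $T_g^*=\{i\in[n]:z_i=g\}$, $n_g^*=|T_g^*|$, $\alpha=\min_g n_g^*/n$, $\Delta=\min_{g\ne h}\|\theta_g-\theta_h\|$ (Euclidean norm). *)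

theory Defs
  imports "HOL-Probability.Probability"
begin

definition cluster :: "nat \<Rightarrow> (nat \<Rightarrow> nat) \<Rightarrow> nat \<Rightarrow> nat set" where
  "cluster n z g = {i \<in> {1..n}. z i = g}"

definition cluster_size :: "nat \<Rightarrow> (nat \<Rightarrow> nat) \<Rightarrow> nat \<Rightarrow> nat" where
  "cluster_size n z g = card (cluster n z g)"

definition min_prop :: "nat \<Rightarrow> nat \<Rightarrow> (nat \<Rightarrow> nat) \<Rightarrow> real" where
  "min_prop n k z = Min ((\<lambda>g. real (cluster_size n z g) / real n) ` {1..k})"

definition min_sep :: "nat \<Rightarrow> (nat \<Rightarrow> 'a::real_normed_vector) \<Rightarrow> real" where
  "min_sep k \<theta> = Min {norm (\<theta> g - \<theta> h) | g h. g \<in> {1..k} \<and> h \<in> {1..k} \<and> g \<noteq> h}"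

definition subgaussian :: "'w measure \<Rightarrow> real \<Rightarrow> ('w \<Rightarrow> 'a::euclidean_space) \<Rightarrow> bool" where
  "subgaussian M \<sigma> X \<longleftrightarrow>
     (\<forall>a::'a. (\<integral>\<^sup>+ \<omega>. ennreal (exp (a \<bullet> X \<omega>)) \<partial>M) \<le> ennreal (exp (\<sigma>\<^sup>2 * (norm a)\<^sup>2 / 2)))"

end

theory Submission
  imports Defs
begin

text \<open>Fix \<open>g \<noteq> h\<close> and put \<open>v = \<theta> h - \<theta> g\<close>. The summands are independent indicators of
  \<open>\<epsilon>0\<^sup>2 \<parallel>v\<parallel>\<^sup>2 \<le> w i \<bullet> v\<close>; dominating each indicator by an exponential tilted in direction \<open>v\<close>
  and applying the sub-Gaussian bound shows that each has a small moment generating function.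
  Chernoff's bound for the sum of the \<open>n\<^sub>g \<ge> c ln n\<close> indicators then gives failure probability
  \<open>exp (- n\<^sub>g / 4) \<le> n powr (- c / 4)\<close>, and a union bound over the other clusters finishes
  the proof.\<close>

lemma exp_mult_indicator_le:
  fixes \<mu> l t x :: real
  assumes "\<mu> \<ge> 0" and "l \<ge> 0"
  shows "exp (\<mu> * (if t \<le> x then 1 else 0)) \<le> 1 + (exp \<mu> - 1) * exp (l * (x - t))"
proof (cases "t \<le> x")
  case True
  have "1 \<le> exp (l * (x - t))" using True assms(2) by simp
  hence "exp \<mu> - 1 \<le> (exp \<mu> - 1) * exp (l * (x - t))"
    using assms(1) by (simp add: mult_le_cancel_left1)
  with True show ?thesis by simp
next
  case False
  then show ?thesis using assms(1) by simp
qed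

lemma (in prob_space) subgaussian_indicator_mgf_le:
  fixes W :: "'a \<Rightarrow> 'b::euclidean_space"
  assumes "W \<in> borel_measurable M" and "subgaussian M \<sigma> W"
    and "\<mu> \<ge> 0" and "l \<ge> 0"
  shows "(\<integral>\<^sup>+\<omega>. ennreal (exp (\<mu> * (if t \<le> W \<omega> \<bullet> v then 1 else 0))) \<partial>M)
          \<le> ennreal (1 + (exp \<mu> - 1) * exp (- l * t + \<sigma>\<^sup>2 * l\<^sup>2 * (norm v)\<^sup>2 / 2))"
proof -
  define C where "C = (exp \<mu> - 1) * exp (- l * t)"
  have C: "C \<ge> 0" using assms(3) by (simp add: C_def)
  have pointwise: "ennreal (exp (\<mu> * (if t \<le> W \<omega> \<bullet> v then 1 else 0)))
      \<le> 1 + ennreal C * ennreal (exp ((l *\<^sub>R v) \<bullet> W \<omega>))" for \<omega>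
  proof -
    have "exp (\<mu> * (if t \<le> W \<omega> \<bullet> v then 1 else 0)) \<le> 1 + C * exp ((l *\<^sub>R v) \<bullet> W \<omega>)"
      using exp_mult_indicator_le[OF assms(3,4), of t "W \<omega> \<bullet> v"]
      by (simp add: C_def exp_diff exp_minus inner_commute right_diff_distrib field_simps)
    hence "ennreal (exp (\<mu> * (if t \<le> W \<omega> \<bullet> v then 1 else 0)))
        \<le> ennreal (1 + C * exp ((l *\<^sub>R v) \<bullet> W \<omega>))"
      by (rule ennreal_leI)
    thus ?thesis using C by (simp add: ennreal_plus ennreal_mult)
  qed
  have "(\<integral>\<^sup>+\<omega>. ennreal (exp (\<mu> * (if t \<le> W \<omega> \<bullet> v then 1 else 0))) \<partial>M)
      \<le> (\<integral>\<^sup>+\<omega>. 1 + ennreal C * ennreal (exp ((l *\<^sub>R v) \<bullet> W \<omega>)) \<partial>M)"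
    by (intro nn_integral_mono pointwise)
  also have "\<dots> = 1 + ennreal C * (\<integral>\<^sup>+\<omega>. ennreal (exp ((l *\<^sub>R v) \<bullet> W \<omega>)) \<partial>M)"
    using assms(1) by (simp add: nn_integral_add nn_integral_cmult emeasure_space_1)
  also have "\<dots> \<le> 1 + ennreal C * ennreal (exp (\<sigma>\<^sup>2 * (norm (l *\<^sub>R v))\<^sup>2 / 2))"
    using assms(2) unfolding subgaussian_def
    by (intro add_left_mono mult_left_mono) (erule spec, simp)
  also have "\<dots> = ennreal (1 + C * exp (\<sigma>\<^sup>2 * (norm (l *\<^sub>R v))\<^sup>2 / 2))"
    using C by (simp add: ennreal_plus ennreal_mult)
  also have "C * exp (\<sigma>\<^sup>2 * (norm (l *\<^sub>R v))\<^sup>2 / 2)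
      = (exp \<mu> - 1) * exp (- l * t + \<sigma>\<^sup>2 * l\<^sup>2 * (norm v)\<^sup>2 / 2)"
    by (simp add: C_def power_mult_distrib mult.assoc flip: exp_add)
  finally show ?thesis .
qed

lemma (in prob_space) indep_sum_tail_le_exp:
  fixes X :: "'i \<Rightarrow> 'a \<Rightarrow> real"
  assumes "finite T" and "indep_vars (\<lambda>_. borel) X T"
    and "\<And>i. i \<in> T \<Longrightarrow> X i \<in> borel_measurable M" and "\<mu> > 0"
    and "\<And>i. i \<in> T \<Longrightarrow> (\<integral>\<^sup>+\<omega>. ennreal (exp (\<mu> * X i \<omega>)) \<partial>M) \<le> ennreal (exp q)"
  shows "prob {\<omega>\<in>space M. m < (\<Sum>i\<in>T. X i \<omega>)} \<le> exp (- \<mu> * m + real (card T) * q)"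
proof -
  define S where "S \<omega> = (\<Sum>i\<in>T. X i \<omega>)" for \<omega>
  have S: "S \<in> borel_measurable M" unfolding S_def using assms(3) by auto
  have "emeasure M {\<omega>\<in>space M. m < S \<omega>} \<le> emeasure M {\<omega>\<in>space M. m \<le> S \<omega>}"
    using S by (intro emeasure_mono) auto
  also have "\<dots> \<le> ennreal (exp (- \<mu> * m))
      * (\<integral>\<^sup>+\<omega>. ennreal (exp (\<mu> * S \<omega>)) * indicator (space M) \<omega> \<partial>M)"
    using S assms(4) by (intro Chernoff_ineq_nn_integral_ge) auto
  also have "(\<integral>\<^sup>+\<omega>. ennreal (exp (\<mu> * S \<omega>)) * indicator (space M) \<omega> \<partial>M)
      = (\<integral>\<^sup>+\<omega>. (\<Prod>i\<in>T. ennreal (exp (\<mu> * X i \<omega>))) \<partial>M)"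
    using assms(1) by (intro nn_integral_cong) (simp add: S_def sum_distrib_left exp_sum prod_ennreal)
  also have "\<dots> = (\<Prod>i\<in>T. \<integral>\<^sup>+\<omega>. ennreal (exp (\<mu> * X i \<omega>)) \<partial>M)"
    using assms(1) by (intro indep_vars_nn_integral indep_vars_compose2[OF assms(2)]) auto
  also have "\<dots> \<le> (\<Prod>i\<in>T. ennreal (exp q))"
    using assms(5) by (intro prod_mono_ennreal)
  also have "\<dots> = ennreal (exp (real (card T) * q))"
    by (simp add: exp_of_nat_mult ennreal_power)
  finally have "emeasure M {\<omega>\<in>space M. m < S \<omega>}
      \<le> ennreal (exp (- \<mu> * m)) * ennreal (exp (real (card T) * q))"
    by (simp add: mult_left_mono)
  thus ?thesis by (simp add: S_def emeasure_eq_measure ennreal_mult[symmetric] flip: exp_add)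
qed

text \<open>With the tilt \<open>\<mu> = s/2\<close> each indicator has moment generating function at most
  \<open>exp (1 - exp (-s/2)) \<le> e\<close>, while the threshold \<open>5N/(2s)\<close> contributes \<open>exp (-5N/4)\<close>.\<close>

lemma (in prob_space) subgaussian_count_tail:
  fixes w :: "'i \<Rightarrow> 'a \<Rightarrow> 'b::euclidean_space"
  assumes "finite T" and "indep_vars (\<lambda>_. borel) w T"
    and "\<And>i. i \<in> T \<Longrightarrow> w i \<in> borel_measurable M"
    and "\<And>i. i \<in> T \<Longrightarrow> subgaussian M \<sigma> (w i)"
    and "\<sigma> > 0" and "s > 0" and "s \<le> e ^ 4 * (norm v)\<^sup>2 / \<sigma>\<^sup>2"
  shows "prob {\<omega>\<in>space M. 5 * real (card T) / (2 * s)
            < (\<Sum>i\<in>T. if e\<^sup>2 * (norm v)\<^sup>2 \<le> w i \<omega> \<bullet> v then 1 else 0 :: real)}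
         \<le> exp (- real (card T) / 4)"
proof -
  define \<mu> where "\<mu> = s / 2"
  define l where "l = e\<^sup>2 / \<sigma>\<^sup>2"
  define N where "N = real (card T)"
  have \<mu>: "\<mu> > 0" using assms(6) by (simp add: \<mu>_def)
  have "- l * (e\<^sup>2 * (norm v)\<^sup>2) + \<sigma>\<^sup>2 * l\<^sup>2 * (norm v)\<^sup>2 / 2 = - (e ^ 4 * (norm v)\<^sup>2 / \<sigma>\<^sup>2) / 2"
    using assms(5) by (simp add: l_def field_simps power2_eq_square numeral_eq_Suc)
  also have "\<dots> \<le> - s / 2" using assms(7) by simp
  finally have exponent: "- l * (e\<^sup>2 * (norm v)\<^sup>2) + \<sigma>\<^sup>2 * l\<^sup>2 * (norm v)\<^sup>2 / 2 \<le> - s / 2" .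
  have mgf: "(\<integral>\<^sup>+\<omega>. ennreal (exp (\<mu> * (if e\<^sup>2 * (norm v)\<^sup>2 \<le> w i \<omega> \<bullet> v then 1 else 0))) \<partial>M)
      \<le> ennreal (exp (1 - exp (- s / 2)))" if i: "i \<in> T" for i
  proof -
    have "1 + (exp \<mu> - 1) * exp (- l * (e\<^sup>2 * (norm v)\<^sup>2) + \<sigma>\<^sup>2 * l\<^sup>2 * (norm v)\<^sup>2 / 2)
        \<le> 1 + (exp \<mu> - 1) * exp (- s / 2)"
      using exponent \<mu> by (intro add_left_mono mult_left_mono) auto
    also have "\<dots> = 1 + (1 - exp (- s / 2))"
      by (simp add: \<mu>_def algebra_simps flip: exp_add)
    also have "\<dots> \<le> exp (1 - exp (- s / 2))" by (rule exp_ge_add_one_self)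
    finally have "1 + (exp \<mu> - 1) * exp (- l * (e\<^sup>2 * (norm v)\<^sup>2) + \<sigma>\<^sup>2 * l\<^sup>2 * (norm v)\<^sup>2 / 2)
        \<le> exp (1 - exp (- s / 2))" .
    with subgaussian_indicator_mgf_le[OF assms(3,4)[OF i], of \<mu> l] \<mu>
    show ?thesis unfolding l_def
      by (meson ennreal_leI order_trans less_imp_le zero_le_divide_iff zero_le_power2)
  qed
  have "prob {\<omega>\<in>space M. 5 * N / (2 * s)
            < (\<Sum>i\<in>T. if e\<^sup>2 * (norm v)\<^sup>2 \<le> w i \<omega> \<bullet> v then 1 else 0 :: real)}
      \<le> exp (- \<mu> * (5 * N / (2 * s)) + N * (1 - exp (- s / 2)))"
    unfolding N_def
  proof (rule indep_sum_tail_le_exp[OF assms(1) _ _ \<mu> mgf])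
    show "indep_vars (\<lambda>_. borel) (\<lambda>i \<omega>. if e\<^sup>2 * (norm v)\<^sup>2 \<le> w i \<omega> \<bullet> v then 1 else 0 :: real) T"
      by (rule indep_vars_compose2[OF assms(2)]) simp
    show "(\<lambda>\<omega>. if e\<^sup>2 * (norm v)\<^sup>2 \<le> w i \<omega> \<bullet> v then 1 else 0 :: real) \<in> borel_measurable M"
      if "i \<in> T" for i
      using assms(3)[OF that] by measurable
  qed
  also have "\<dots> \<le> exp (- N / 4)"
  proof -
    have "\<mu> * (5 * N / (2 * s)) = 5 * N / 4" using assms(6) by (simp add: \<mu>_def)
    moreover have "N * (1 - exp (- s / 2)) \<le> N" by (simp add: N_def mult_left_le)
    ultimately show ?thesis by (simp only: exp_le_cancel_iff mult_minus_left)
  qed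
  finally show ?thesis by (simp add: N_def)
qed

lemma (in prob_space) prob_diff_UN_ge:
  assumes "finite G" and "\<And>g. g \<in> G \<Longrightarrow> B g \<in> events"
    and "\<And>g. g \<in> G \<Longrightarrow> prob (B g) \<le> p"
  shows "prob (space M - (\<Union>g\<in>G. B g)) \<ge> 1 - real (card G) * p"
proof -
  have "prob (\<Union>g\<in>G. B g) \<le> (\<Sum>g\<in>G. prob (B g))"
    using assms(1,2) by (intro finite_measure_subadditive_finite) auto
  also have "\<dots> \<le> real (card G) * p"
    using sum_mono[of G "\<lambda>g. prob (B g)" "\<lambda>_. p"] assms(3) by simp
  moreover have "(\<Union>g\<in>G. B g) \<in> events" using assms(1,2) by blast
  ultimately show ?thesis by (simp add: prob_compl)
qed

lemma finite_min_sep_set: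
  fixes \<theta> :: "nat \<Rightarrow> 'a::real_normed_vector"
  shows "finite {norm (\<theta> g - \<theta> h) | g h. g \<in> {1..k} \<and> h \<in> {1..k} \<and> g \<noteq> h}"
proof (rule finite_subset)
  show "{norm (\<theta> g - \<theta> h) | g h. g \<in> {1..k} \<and> h \<in> {1..k} \<and> g \<noteq> h}
      \<subseteq> (\<lambda>(g, h). norm (\<theta> g - \<theta> h)) ` ({1..k} \<times> {1..k})"
    by auto
qed simp

lemma min_sep_le:
  assumes "g \<in> {1..k}" and "h \<in> {1..k}" and "g \<noteq> h"
  shows "min_sep k \<theta> \<le> norm (\<theta> g - \<theta> h)"
  unfolding min_sep_def using assms by (intro Min_le finite_min_sep_set) blast

lemma min_sep_pos:
  assumes "inj_on \<theta> {1..k}" and "g \<in> {1..k}" and "h \<in> {1..k}" and "g \<noteq> h"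
  shows "min_sep k \<theta> > 0"
  unfolding min_sep_def using assms finite_min_sep_set[of \<theta> k]
  by (subst Min_gr_iff) (auto simp: inj_on_eq_iff)

lemma min_sep_snr_bounds:
  assumes "inj_on \<theta> {1..k}" and "g \<in> {1..k}" and "h \<in> {1..k}" and "g \<noteq> h"
    and "\<sigma> > 0" and "\<epsilon> > 0"
  shows "\<epsilon> ^ 4 * (min_sep k \<theta> / \<sigma>)\<^sup>2 > 0"
    and "\<epsilon> ^ 4 * (min_sep k \<theta> / \<sigma>)\<^sup>2 \<le> \<epsilon> ^ 4 * (norm (\<theta> g - \<theta> h))\<^sup>2 / \<sigma>\<^sup>2"
proof -
  have \<Delta>: "0 < min_sep k \<theta>" "min_sep k \<theta> \<le> norm (\<theta> g - \<theta> h)"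
    using min_sep_pos[OF assms(1-4)] min_sep_le[OF assms(2-4)] by auto
  show "\<epsilon> ^ 4 * (min_sep k \<theta> / \<sigma>)\<^sup>2 > 0" using \<Delta> assms(5,6) by simp
  show "\<epsilon> ^ 4 * (min_sep k \<theta> / \<sigma>)\<^sup>2 \<le> \<epsilon> ^ 4 * (norm (\<theta> g - \<theta> h))\<^sup>2 / \<sigma>\<^sup>2"
    using \<Delta> assms(5,6) unfolding power_divide times_divide_eq_right
    by (intro divide_right_mono mult_left_mono power_mono) auto
qed

lemma min_prop_le_cluster_size:
  assumes "g \<in> {1..k}"
  shows "real n * min_prop n k z \<le> real (cluster_size n z g)"
proof (cases "n = 0")
  case False
  have "min_prop n k z \<le> real (cluster_size n z g) / real n"
    unfolding min_prop_def using assms by (intro Min_le) auto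
  with False show ?thesis by (simp add: field_simps)
qed simp

lemma exp_neg_div_le_powr:
  fixes x a c m :: real
  assumes "x > 0" and "a > 0" and "c * ln x \<le> m"
  shows "exp (- m / a) \<le> x powr (- c / a)"
proof -
  have "exp (- m / a) \<le> exp (- (c * ln x) / a)" using assms(2,3) by (simp add: divide_right_mono)
  also have "\<dots> = x powr (- c / a)" using assms(1) by (simp add: powr_def)
  finally show ?thesis .
qed

theorem mainTheorem4:
  fixes M :: "'w measure" and w :: "nat \<Rightarrow> 'w \<Rightarrow> 'a::euclidean_space"
    and \<theta> :: "nat \<Rightarrow> 'a" and z :: "nat \<Rightarrow> nat"
    and n k h :: nat and \<sigma> \<epsilon>0 c :: real
  assumes "prob_space M"
    and "n \<ge> 1"
    and "\<forall>i\<in>{1..n}. z i \<in> {1..k}"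
    and "\<forall>g\<in>{1..k}. \<forall>g'\<in>{1..k}. g \<noteq> g' \<longrightarrow> \<theta> g \<noteq> \<theta> g'"
    and "\<forall>i\<in>{1..n}. w i \<in> borel_measurable M"
    and "prob_space.indep_vars M (\<lambda>_. borel) w {1..n}"
    and "\<forall>i\<in>{1..n}. integrable M (w i) \<and> prob_space.expectation M (w i) = 0"
    and "\<sigma> > 0"
    and "\<forall>i\<in>{1..n}. subgaussian M \<sigma> (w i)"
    and "\<epsilon>0 > 0" and "c > 0" and "h \<in> {1..k}"
    and "real n * min_prop n k z \<ge> c * ln (real n)"
  shows "\<exists>E \<in> sets M.
           measure M E \<ge> 1 - real k * real n powr (- c / 4) \<and>
           (\<forall>\<omega>\<in>E. \<forall>g\<in>{1..k}. g \<noteq> h \<longrightarrow>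
              (\<Sum>i\<in>cluster n z g.
                 (if \<epsilon>0\<^sup>2 * (norm (\<theta> g - \<theta> h))\<^sup>2 \<le> w i \<omega> \<bullet> (\<theta> h - \<theta> g) then 1 else 0 :: real))
              \<le> 5 * real (cluster_size n z g) / (2 * \<epsilon>0 ^ 4 * (min_sep k \<theta> / \<sigma>)\<^sup>2))"
proof -
  interpret prob_space M by fact
  define s where "s = \<epsilon>0 ^ 4 * (min_sep k \<theta> / \<sigma>)\<^sup>2"
  define B where "B g = {\<omega>\<in>space M. 5 * real (cluster_size n z g) / (2 * s)
    < (\<Sum>i\<in>cluster n z g. if \<epsilon>0\<^sup>2 * (norm (\<theta> h - \<theta> g))\<^sup>2 \<le> w i \<omega> \<bullet> (\<theta> h - \<theta> g) then 1 else 0 :: real)}"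
    for g
  have cluster: "cluster n z g \<subseteq> {1..n}" "finite (cluster n z g)" for g
    by (auto simp: cluster_def)
  have B_tail: "g \<in> {1..k} - {h} \<Longrightarrow> B g \<in> events \<and> prob (B g) \<le> real n powr (- c / 4)" for g
  proof -
    assume g: "g \<in> {1..k} - {h}"
    have inj: "inj_on \<theta> {1..k}" using assms(4) by (auto intro: inj_onI)
    have "s > 0" "s \<le> \<epsilon>0 ^ 4 * (norm (\<theta> h - \<theta> g))\<^sup>2 / \<sigma>\<^sup>2"
      using min_sep_snr_bounds[OF inj assms(12), of g \<sigma> \<epsilon>0] g assms(8,10) by (auto simp: s_def)
    then have "prob (B g) \<le> exp (- real (cluster_size n z g) / 4)"
      unfolding B_def cluster_size_def using assms(5,8,9) cluster[of g]
      by (intro subgaussian_count_tail indep_vars_subset[OF assms(6)]) auto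
    also have "\<dots> \<le> real n powr (- c / 4)"
      using min_prop_le_cluster_size[of g k n z] g assms(2,13) by (intro exp_neg_div_le_powr) auto
    moreover have "B g \<in> events"
    proof -
      have [measurable]: "w i \<in> borel_measurable M" if "i \<in> cluster n z g" for i
        using assms(5) cluster(1) that by blast
      show ?thesis unfolding B_def by measurable
    qed
    ultimately show ?thesis by simp
  qed
  define E where "E = space M - (\<Union>g\<in>{1..k} - {h}. B g)"
  have "1 - real k * real n powr (- c / 4) \<le> 1 - real (card ({1..k} - {h})) * real n powr (- c / 4)"
    using card_Diff1_le[of "{1..k}" h] by (simp add: mult_right_mono)
  also have "\<dots> \<le> prob E"
    unfolding E_def using B_tail by (intro prob_diff_UN_ge) auto
  finally have "prob E \<ge> 1 - real k * real n powr (- c / 4)" .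
  moreover have "E \<in> events" unfolding E_def using B_tail by blast
  moreover have "\<forall>\<omega>\<in>E. \<forall>g\<in>{1..k}. g \<noteq> h \<longrightarrow>
      (\<Sum>i\<in>cluster n z g. if \<epsilon>0\<^sup>2 * (norm (\<theta> g - \<theta> h))\<^sup>2 \<le> w i \<omega> \<bullet> (\<theta> h - \<theta> g) then 1 else 0 :: real)
        \<le> 5 * real (cluster_size n z g) / (2 * \<epsilon>0 ^ 4 * (min_sep k \<theta> / \<sigma>)\<^sup>2)"
    unfolding E_def B_def s_def by (auto simp: norm_minus_commute mult.assoc)
  ultimately show ?thesis by blast
qed

end
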